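(* For any graph $G$ and any integer $d\geq 2$, the pair $(BI_{d+1}(G),BI_d(G))$ is $(d-2)$-connected.
   Context: All graphs are finite and simple; $\alpha(G)$ is the independence number and $G[S]$ the induced subgraph on $S$. $BI_d(G)=\{\sigma\subseteq V(G):\ \alpha(G[\sigma])<d\}$; $BI_d(G)$ is a subcomplex of $BI_{d+1}(G)$. A pair $(X,A)$ is $m$-connected if $\pi_0(A)\to\pi_0(X)$ is surjective and $\pi_i(X,A)=0$ for $1\le i\le m$. *)

theory Defs
  imports "HOL-Analysis.Analysis"
begin

definition simple_graph :: "'n set \<Rightarrow> ('n \<Rightarrow> 'n \<Rightarrow> bool) \<Rightarrow> bool" where
  "simple_graph V E \<longleftrightarrow> finite V \<and> (\<forall>x y. E x y \<longrightarrow> x \<in> V \<and> y \<in> V)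
     \<and> (\<forall>x y. E x y \<longrightarrow> E y x) \<and> (\<forall>x. \<not> E x x)"

definition indep_set :: "('n \<Rightarrow> 'n \<Rightarrow> bool) \<Rightarrow> 'n set \<Rightarrow> bool" where
  "indep_set E S \<longleftrightarrow> (\<forall>x\<in>S. \<forall>y\<in>S. \<not> E x y)"

definition indep_number :: "('n \<Rightarrow> 'n \<Rightarrow> bool) \<Rightarrow> 'n set \<Rightarrow> nat" where
  "indep_number E \<sigma> = Max {card S | S. S \<subseteq> \<sigma> \<and> indep_set E S}"

definition BI :: "nat \<Rightarrow> 'n set \<Rightarrow> ('n \<Rightarrow> 'n \<Rightarrow> bool) \<Rightarrow> 'n set set" where
  "BI d V E = {\<sigma>. \<sigma> \<subseteq> V \<and> indep_number E \<sigma> < d}"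

definition realization :: "('n::finite) set set \<Rightarrow> (real ^ 'n) set" where
  "realization K = (\<Union>\<sigma>\<in>K. convex hull ((\<lambda>v. axis v 1) ` \<sigma>))"

definition ndisc :: "nat \<Rightarrow> (nat \<Rightarrow> real) topology" where
  "ndisc i = subtopology (Euclidean_space i) {x. (\<Sum>k<i. x k ^ 2) \<le> 1}"

definition disc_base :: "nat \<Rightarrow> real" where
  "disc_base = (\<lambda>k. if k = 0 then 1 else 0)"

text \<open>pi_i(X,A,x0) is trivial (i >= 1): every map of triples (D^i,S^(i-1),s0) -> (X,A,x0)
  is homotopic, through maps of triples, to the constant map.\<close>
definition rel_homotopy_trivial ::
  "nat \<Rightarrow> 'a::topological_space set \<Rightarrow> 'a set \<Rightarrow> 'a \<Rightarrow> bool" where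
  "rel_homotopy_trivial i X A x0 \<longleftrightarrow>
     (\<forall>f. continuous_map (ndisc i) (top_of_set X) f
          \<and> f ` topspace (nsphere (i - 1)) \<subseteq> A \<and> f disc_base = x0 \<longrightarrow>
        homotopic_with (\<lambda>h. h ` topspace (nsphere (i - 1)) \<subseteq> A \<and> h disc_base = x0)
          (ndisc i) (top_of_set X) f (\<lambda>_. x0))"

definition pair_connected :: "nat \<Rightarrow> 'a::topological_space set \<Rightarrow> 'a set \<Rightarrow> bool" where
  "pair_connected m X A \<longleftrightarrow> A \<subseteq> X
     \<and> (\<forall>x\<in>X. \<exists>a\<in>A. path_component X x a)
     \<and> (\<forall>i. 1 \<le> i \<and> i \<le> m \<longrightarrow> (\<forall>x0\<in>A. rel_homotopy_trivial i X A x0))"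

end

theory Submission
  imports Defs
begin

text \<open>Write \<open>K = BI\<^sub>d\<^sub>+\<^sub>1(G)\<close> and \<open>L = BI\<^sub>d(G)\<close>. A face of \<open>K\<close> that is not in \<open>L\<close> has
  independence number \<open>d\<close>, hence at least \<open>d\<close> vertices: \<open>K\<close> arises from \<open>L\<close> by adding simplices
  of dimension at least \<open>d - 1\<close>. Given a map of \<open>(D\<^sup>i, S\<^sup>i\<^sup>-\<^sup>1)\<close> into \<open>(|K|, |L|)\<close> with
  \<open>i \<le> d - 2\<close>, embed the disc in an \<open>i\<close>-dimensional polytope and remove the new simplices one at
  a time, maximal ones first: on the preimage of such a simplex \<open>T\<close>, the map is replaced by an
  extension into the sphere \<open>rel_frontier T\<close> of its restriction to the part already mapped there,
  which exists because the domain has smaller dimension than \<open>T\<close>; the straight-line homotopy inside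
  \<open>T\<close> connects the two maps. Once the map lands in \<open>|L|\<close>, contracting the disc to its base point
  kills its relative homotopy class. Every vertex lies in \<open>L\<close> since \<open>d \<ge> 2\<close>, which gives the
  surjectivity on path components.\<close>

section \<open>Simplices and realizations\<close>

definition simplex_of :: "('n::finite) set \<Rightarrow> (real ^ 'n) set" where
  "simplex_of \<sigma> = convex hull ((\<lambda>v. axis v 1) ` \<sigma>)"

lemma realization_eq_UN_simplex_of: "realization K = (\<Union>\<sigma>\<in>K. simplex_of \<sigma>)"
  by (simp add: realization_def simplex_of_def)

lemma inj_axis_one: "inj (\<lambda>v. axis v 1 :: real ^ 'n::finite)"
  by (auto simp: inj_def axis_eq_axis)

lemma sum_scaleR_axis_component:
  fixes \<sigma> :: "('n::finite) set"
  shows "(\<Sum>v\<in>\<sigma>. c v *\<^sub>R (axis v 1 :: real ^ 'n)) $ w = (if w \<in> \<sigma> then c w else 0)"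
  by (simp add: sum_component axis_def if_distrib cong: if_cong)

lemma sum_scaleR_axis_eq_self:
  fixes y :: "real ^ 'n::finite"
  assumes "\<And>v. v \<notin> \<sigma> \<Longrightarrow> y $ v = 0"
  shows "(\<Sum>v\<in>\<sigma>. y $ v *\<^sub>R axis v 1) = y"
  unfolding vec_eq_iff sum_scaleR_axis_component using assms by auto

lemma aff_dim_le_card_support:
  fixes S :: "(real ^ 'n::finite) set"
  assumes "\<And>y v. y \<in> S \<Longrightarrow> v \<notin> J \<Longrightarrow> y $ v = 0"
  shows "aff_dim S \<le> int (card J)"
proof -
  define E where "E = (\<lambda>v. axis v 1 :: real ^ 'n) ` J"
  have "S \<subseteq> span E"
  proof
    fix y assume "y \<in> S"
    then have "y = (\<Sum>v\<in>J. y $ v *\<^sub>R axis v 1)"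
      using assms sum_scaleR_axis_eq_self by metis
    also have "\<dots> \<in> span E"
      by (intro span_sum span_scale span_base) (auto simp: E_def)
    finally show "y \<in> span E" .
  qed
  then have "aff_dim S \<le> int (dim E)"
    using aff_dim_subset[of S "span E"] by (simp add: aff_dim_subspace)
  also have "dim E \<le> card E"
    by (simp add: E_def dim_le_card')
  also have "card E \<le> card J"
    unfolding E_def by (rule card_image_le) simp
  finally show ?thesis by simp
qed

lemma affine_independent_axis_one: "\<not> affine_dependent ((\<lambda>v. axis v 1 :: real ^ 'n::finite) ` \<sigma>)"
proof -
  have "(\<lambda>v. axis v 1 :: real ^ 'n) ` \<sigma> \<subseteq> Basis"
    by auto
  then show ?thesis
    using independent_Basis independent_mono affine_dependent_imp_dependent by blast
qed

lemma axis_combination_iff: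
  fixes \<sigma> :: "('n::finite) set" and y :: "real ^ 'n"
  defines "A \<equiv> (\<lambda>v. axis v 1 :: real ^ 'n) ` \<sigma>"
  shows "(\<exists>u. (\<forall>x\<in>A. Q (u x)) \<and> sum u A = 1 \<and> (\<Sum>x\<in>A. u x *\<^sub>R x) = y) \<longleftrightarrow>
    (\<forall>v\<in>\<sigma>. Q (y $ v)) \<and> (\<forall>v. v \<notin> \<sigma> \<longrightarrow> y $ v = 0) \<and> sum (($) y) UNIV = 1"
    (is "?lhs \<longleftrightarrow> ?rhs")
proof
  have reindex: "sum g A = (\<Sum>v\<in>\<sigma>. g (axis v 1))" for g :: "real ^ 'n \<Rightarrow> 'b::comm_monoid_add"
    unfolding A_def by (rule sum.reindex_cong[OF inj_on_subset[OF inj_axis_one]]) auto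
  show ?rhs if ?lhs
  proof -
    obtain u where u: "\<forall>x\<in>A. Q (u x)" "sum u A = 1" "(\<Sum>x\<in>A. u x *\<^sub>R x) = y"
      using \<open>?lhs\<close> by blast
    have y: "y $ w = (if w \<in> \<sigma> then u (axis w 1) else 0)" for w
      using u(3) sum_scaleR_axis_component[of "\<lambda>v. u (axis v 1)" \<sigma> w] by (simp add: reindex)
    have "sum (($) y) UNIV = sum (($) y) \<sigma>"
      by (rule sum.mono_neutral_right) (auto simp: y)
    also have "\<dots> = 1"
      using u(2) by (simp add: reindex y)
    finally show ?rhs
      using u(1) by (auto simp: y A_def)
  qed
  show ?lhs if ?rhs
  proof (intro exI conjI)
    have "sum (($) y) \<sigma> = sum (($) y) UNIV"
      by (rule sum.mono_neutral_left) (use \<open>?rhs\<close> in auto)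
    then show "sum (\<lambda>x. x \<bullet> y) A = 1"
      using \<open>?rhs\<close> by (simp add: reindex inner_axis')
    show "(\<Sum>x\<in>A. (x \<bullet> y) *\<^sub>R x) = y"
      using \<open>?rhs\<close> by (simp add: reindex inner_axis' sum_scaleR_axis_eq_self)
  qed (use \<open>?rhs\<close> in \<open>auto simp: A_def inner_axis'\<close>)
qed

lemma mem_simplex_of_iff:
  "y \<in> simplex_of \<sigma> \<longleftrightarrow> (\<forall>v. 0 \<le> y $ v) \<and> {v. y $ v \<noteq> 0} \<subseteq> \<sigma> \<and> sum (($) y) UNIV = 1"
  unfolding simplex_of_def convex_hull_finite[OF finite_imageI[OF finite]]
  by (subst mem_Collect_eq, subst axis_combination_iff) auto

lemma mem_rel_interior_simplex_of_iff:
  "y \<in> rel_interior (simplex_of \<sigma>) \<longleftrightarrow>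
     (\<forall>v. 0 \<le> y $ v) \<and> {v. y $ v \<noteq> 0} = \<sigma> \<and> sum (($) y) UNIV = 1"
  unfolding simplex_of_def rel_interior_convex_hull_explicit[OF affine_independent_axis_one]
  by (subst mem_Collect_eq, subst axis_combination_iff) (auto simp: less_le)

lemma aff_dim_simplex_of: "aff_dim (simplex_of (\<sigma> :: ('n::finite) set)) = int (card \<sigma>) - 1"
  using aff_dim_affine_independent[OF affine_independent_axis_one, of \<sigma>]
    card_image[OF inj_on_subset[OF inj_axis_one, of \<sigma>]]
  by (simp add: simplex_of_def aff_dim_convex_hull)

lemma compact_simplex_of: "compact (simplex_of \<sigma>)"
  by (simp add: simplex_of_def compact_convex_hull finite_imp_compact)

lemma convex_simplex_of: "convex (simplex_of \<sigma>)"
  by (simp add: simplex_of_def)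

lemma axis_mem_simplex_of: "v \<in> \<sigma> \<Longrightarrow> axis v 1 \<in> simplex_of \<sigma>"
  unfolding simplex_of_def by (rule hull_inc) simp

definition downward_closed :: "'a set set \<Rightarrow> bool" where
  "downward_closed K \<longleftrightarrow> (\<forall>\<sigma>\<in>K. \<forall>\<rho>. \<rho> \<subseteq> \<sigma> \<longrightarrow> \<rho> \<in> K)"

lemma mem_realization_iff:
  assumes "downward_closed K"
  shows "y \<in> realization K \<longleftrightarrow> (\<forall>v. 0 \<le> y $ v) \<and> {v. y $ v \<noteq> 0} \<in> K \<and> sum (($) y) UNIV = 1"
  using assms unfolding realization_eq_UN_simplex_of downward_closed_def
  by (auto simp: mem_simplex_of_iff)

lemma realization_mono: "K \<subseteq> L \<Longrightarrow> realization K \<subseteq> realization L"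
  by (auto simp: realization_def)

lemma closed_realization: "closed (realization K)"
  unfolding realization_eq_UN_simplex_of
  by (intro closed_UN ballI compact_imp_closed compact_simplex_of) simp

lemma
  assumes "downward_closed K" "\<tau> \<in> K" and maximal: "\<And>\<sigma>. \<sigma> \<in> K \<Longrightarrow> \<tau> \<subseteq> \<sigma> \<Longrightarrow> \<sigma> = \<tau>"
  shows downward_closed_remove_maximal: "downward_closed (K - {\<tau>})"
    and realization_remove_maximal:
      "realization (K - {\<tau>}) = realization K - rel_interior (simplex_of \<tau>)"
proof -
  show *: "downward_closed (K - {\<tau>})"
    using assms unfolding downward_closed_def by blast
  show "realization (K - {\<tau>}) = realization K - rel_interior (simplex_of \<tau>)"
    using assms(2) by (auto simp: mem_realization_iff[OF *] mem_realization_iff[OF assms(1)]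
      mem_rel_interior_simplex_of_iff)
qed

section \<open>Pushing maps into a subcomplex\<close>

lemma homotopic_with_linear_rel:
  fixes f g :: "'a::real_normed_vector \<Rightarrow> 'b::real_normed_vector"
  assumes "continuous_on S f" "continuous_on S g"
    and "\<And>x. x \<in> S \<Longrightarrow> closed_segment (f x) (g x) \<subseteq> U"
    and "\<And>z. z \<in> Z \<Longrightarrow> g z = f z"
  shows "homotopic_with_canon (\<lambda>h. \<forall>z\<in>Z. h z = f z) S U f g"
proof -
  define H where "H = (\<lambda>(t, x). (1 - t) *\<^sub>R f x + t *\<^sub>R g x)"
  have "continuous_on ({0..1} \<times> S) (\<lambda>p. f (snd p))" "continuous_on ({0..1} \<times> S) (\<lambda>p. g (snd p))"
    by (auto intro!: continuous_on_compose2[OF assms(1) continuous_on_snd]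
        continuous_on_compose2[OF assms(2) continuous_on_snd])
  then have "continuous_on ({0..1} \<times> S) H"
    unfolding H_def case_prod_unfold by (intro continuous_intros)
  moreover have "H ` ({0..1} \<times> S) \<subseteq> U"
    using assms(3) by (fastforce simp: H_def closed_segment_def)
  moreover have "H (t, z) = f z" if "z \<in> Z" for t z
    using assms(4)[OF that] by (simp add: H_def algebra_simps)
  ultimately show ?thesis
    unfolding homotopic_with_def by (intro exI[of _ H]) (auto simp: H_def)
qed

lemma extend_off_rel_interior:
  fixes B P :: "'a::euclidean_space set" and T Y :: "'b::euclidean_space set"
  assumes "B \<subseteq> P" "closed B" "polytope P"
    and T: "compact T" "convex T" "aff_dim P < aff_dim T" "T \<subseteq> Y"
    and closed_Y': "closed (Y - rel_interior T)"
    and f: "continuous_on B f" "f ` B \<subseteq> Y"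
  obtains g where "continuous_on B g" "g ` B \<subseteq> Y - rel_interior T"
    "\<And>x. x \<in> B \<Longrightarrow> f x \<notin> rel_interior T \<Longrightarrow> g x = f x"
    "\<And>x. x \<in> B \<Longrightarrow> f x \<in> T \<Longrightarrow> g x \<in> T"
proof -
  define C where "C = B \<inter> f -` T"
  define S where "S = B \<inter> f -` (Y - rel_interior T)"
  have closure_T: "closure T = T"
    using T(1) by (simp add: compact_imp_closed)
  have BCS: "B = C \<union> S"
    using f(2) rel_interior_subset unfolding C_def S_def by blast
  have "closed C" "closed S"
    unfolding C_def S_def using continuous_closed_preimage[OF f(1) \<open>closed B\<close>] T(1) closed_Y'
    by (auto simp: compact_imp_closed)
  obtain g0 where g0: "continuous_on P g0" "g0 \<in> P \<rightarrow> rel_frontier T" "\<And>x. x \<in> C \<inter> S \<Longrightarrow> g0 x = f x"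
  proof (rule extend_map_cell_complex_to_sphere[of "{P}" "C \<inter> S" T f])
    show "continuous_on (C \<inter> S) f"
      by (rule continuous_on_subset[OF f(1)]) (auto simp: C_def)
    show "f \<in> C \<inter> S \<rightarrow> rel_frontier T"
      unfolding C_def S_def rel_frontier_def closure_T by blast
    show "X \<inter> Y face_of X" if "X \<in> {P}" "Y \<in> {P}" for X Y
      using that \<open>polytope P\<close> by (simp add: face_of_refl polytope_imp_convex)
    show "C \<inter> S \<subseteq> \<Union>{P}"
      using \<open>B \<subseteq> P\<close> by (auto simp: C_def)
    show "bounded T"
      using T(1) by (rule compact_imp_bounded)
  qed (use \<open>closed C\<close> \<open>closed S\<close> \<open>polytope P\<close> T in auto)
  define g where "g x = (if x \<in> C then g0 x else f x)" for x
  have g_eq_f: "g x = f x" if "x \<in> S" for x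
    using g0(3) that unfolding g_def by auto
  have "continuous_on C g0"
    by (rule continuous_on_subset[OF g0(1)]) (use \<open>B \<subseteq> P\<close> in \<open>auto simp: C_def\<close>)
  then have "continuous_on C g"
    by (rule continuous_on_eq) (simp add: g_def)
  have "continuous_on S f"
    by (rule continuous_on_subset[OF f(1)]) (auto simp: S_def)
  then have "continuous_on S g"
    by (rule continuous_on_eq) (simp add: g_eq_f)
  show thesis
  proof (rule that)
    show "continuous_on B g"
      using \<open>continuous_on C g\<close> \<open>continuous_on S g\<close> BCS \<open>closed C\<close> \<open>closed S\<close>
        continuous_on_closed_Un by metis
    show "g x \<in> T" if "x \<in> B" "f x \<in> T" for x
      using g0(2) \<open>B \<subseteq> P\<close> that by (auto simp: g_def C_def rel_frontier_def closure_T)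
    show "g x = f x" if "x \<in> B" "f x \<notin> rel_interior T" for x
      using that f(2) g_eq_f by (auto simp: S_def)
    have "g x \<in> Y - rel_interior T" if "x \<in> B" for x
    proof (cases "x \<in> C")
      case True
      then show ?thesis
        using g0(2) \<open>B \<subseteq> P\<close> T(4) that by (auto simp: g_def rel_frontier_def closure_T)
    next
      case False
      then show ?thesis
        using BCS that g_eq_f by (auto simp: S_def)
    qed
    then show "g ` B \<subseteq> Y - rel_interior T"
      by blast
  qed
qed

lemma homotopic_off_rel_interior:
  fixes B P :: "'a::euclidean_space set" and T Y :: "'b::euclidean_space set"
  assumes "B \<subseteq> P" "closed B" "polytope P"
    and T: "compact T" "convex T" "aff_dim P < aff_dim T" "T \<subseteq> Y"
    and "closed (Y - rel_interior T)"
    and f: "continuous_on B f" "f ` B \<subseteq> Y"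
    and Z: "Z \<subseteq> B" "f ` Z \<subseteq> Y - rel_interior T"
  obtains g where "g ` B \<subseteq> Y - rel_interior T"
    "homotopic_with_canon (\<lambda>h. \<forall>z\<in>Z. h z = f z) B Y f g"
proof -
  obtain g where g: "continuous_on B g" "g ` B \<subseteq> Y - rel_interior T"
    and g_eq_f: "\<And>x. x \<in> B \<Longrightarrow> f x \<notin> rel_interior T \<Longrightarrow> g x = f x"
    and g_T: "\<And>x. x \<in> B \<Longrightarrow> f x \<in> T \<Longrightarrow> g x \<in> T"
    using extend_off_rel_interior[OF assms(1-10)] by blast
  have "homotopic_with_canon (\<lambda>h. \<forall>z\<in>Z. h z = f z) B Y f g"
  proof (rule homotopic_with_linear_rel[OF f(1) g(1)])
    show "closed_segment (f x) (g x) \<subseteq> Y" if "x \<in> B" for x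
    proof (cases "f x \<in> T")
      case True
      then show ?thesis
        using closed_segment_subset[OF _ g_T[OF that] T(2)] T(4) by blast
    next
      case False
      then show ?thesis
        using that f(2) g_eq_f rel_interior_subset by fastforce
    qed
    show "g z = f z" if "z \<in> Z" for z
      using that Z g_eq_f by blast
  qed
  with g(2) show thesis
    using that by blast
qed

lemma ex_maximal_face_not_in_subcomplex:
  fixes K L :: "('n::finite) set set"
  assumes "downward_closed L" "K - L \<noteq> {}"
  obtains \<tau> where "\<tau> \<in> K - L" "\<And>\<sigma>. \<sigma> \<in> K \<Longrightarrow> \<tau> \<subseteq> \<sigma> \<Longrightarrow> \<sigma> = \<tau>"
proof -
  obtain \<tau> where \<tau>: "\<tau> \<in> K - L" and max: "\<And>\<sigma>. \<sigma> \<in> K - L \<Longrightarrow> \<tau> \<subseteq> \<sigma> \<Longrightarrow> \<sigma> = \<tau>"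
    using finite_has_maximal[OF finite[of "K - L"] assms(2)] by auto
  have "\<sigma> = \<tau>" if "\<sigma> \<in> K" "\<tau> \<subseteq> \<sigma>" for \<sigma>
  proof (rule max)
    show "\<sigma> \<in> K - L"
      using that \<tau> assms(1) unfolding downward_closed_def by blast
  qed (rule that(2))
  with \<tau> show thesis
    using that by blast
qed

lemma homotopic_into_subcomplex:
  fixes B P :: "(real ^ 'n::finite) set"
  assumes "B \<subseteq> P" "closed B" "polytope P"
    and "downward_closed K" "downward_closed L" "L \<subseteq> K"
    and "\<And>\<tau>. \<tau> \<in> K - L \<Longrightarrow> aff_dim P < int (card \<tau>) - 1"
    and "continuous_on B f" "f ` B \<subseteq> realization K" "Z \<subseteq> B" "f ` Z \<subseteq> realization L"
  obtains g where "g ` B \<subseteq> realization L"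
    "homotopic_with_canon (\<lambda>h. \<forall>z\<in>Z. h z = f z) B (realization K) f g"
proof -
  have "\<exists>g. g ` B \<subseteq> realization L \<and>
          homotopic_with_canon (\<lambda>h. \<forall>z\<in>Z. h z = f z) B (realization K) f g"
    using assms(4-)
  proof (induction "card (K - L)" arbitrary: K f rule: less_induct)
    case less
    show ?case
    proof (cases "K - L = {}")
      case True
      then have "K = L"
        using less.prems(3) by blast
      then show ?thesis
        using less.prems(5,6) by (intro exI[of _ f]) auto
    next
      case False
      then obtain \<tau> where \<tau>: "\<tau> \<in> K - L" and max_K: "\<And>\<sigma>. \<sigma> \<in> K \<Longrightarrow> \<tau> \<subseteq> \<sigma> \<Longrightarrow> \<sigma> = \<tau>"
        using ex_maximal_face_not_in_subcomplex[OF less.prems(2)] by blast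
      have remove: "realization (K - {\<tau>}) = realization K - rel_interior (simplex_of \<tau>)"
        using realization_remove_maximal[OF less.prems(1) _ max_K] \<tau> by blast
      have L_sub: "realization L \<subseteq> realization (K - {\<tau>})"
        using less.prems(3) \<tau> by (intro realization_mono) blast
      obtain g1 where g1: "g1 ` B \<subseteq> realization (K - {\<tau>})"
        and hom1: "homotopic_with_canon (\<lambda>h. \<forall>z\<in>Z. h z = f z) B (realization K) f g1"
      proof (rule homotopic_off_rel_interior[OF assms(1-3) compact_simplex_of convex_simplex_of])
        show "aff_dim P < aff_dim (simplex_of \<tau>)"
          using less.prems(4) \<tau> by (simp add: aff_dim_simplex_of)
        show "simplex_of \<tau> \<subseteq> realization K"
          using \<tau> unfolding realization_eq_UN_simplex_of by blast
        show "closed (realization K - rel_interior (simplex_of \<tau>))"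
          using closed_realization remove by metis
        show "f ` Z \<subseteq> realization K - rel_interior (simplex_of \<tau>)"
          using less.prems(8) L_sub remove by blast
      qed (use less.prems(5-7) remove in auto)
      have g1_Z: "g1 z = f z" if "z \<in> Z" for z
        using homotopic_with_imp_property[OF hom1] that by blast
      have "\<exists>g. g ` B \<subseteq> realization L \<and>
          homotopic_with_canon (\<lambda>h. \<forall>z\<in>Z. h z = g1 z) B (realization (K - {\<tau>})) g1 g"
      proof (rule less.hyps)
        show "card (K - {\<tau>} - L) < card (K - L)"
          using \<tau> by (auto intro: psubset_card_mono)
        show "continuous_on B g1"
          using homotopic_with_imp_continuous[OF hom1] by blast
        show "downward_closed (K - {\<tau>})"
          using downward_closed_remove_maximal[OF less.prems(1) _ max_K] \<tau> by blast
        show "g1 ` Z \<subseteq> realization L"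
          using g1_Z less.prems(8) by auto
      qed (use less.prems(2-4,7) \<tau> g1 in auto)
      then obtain g2 where "g2 ` B \<subseteq> realization L"
        and "homotopic_with_canon (\<lambda>h. \<forall>z\<in>Z. h z = g1 z) B (realization (K - {\<tau>})) g1 g2"
        by blast
      then have "homotopic_with_canon (\<lambda>h. \<forall>z\<in>Z. h z = f z) B (realization K) g1 g2"
        using g1_Z homotopic_with_subset_right[OF homotopic_with_mono realization_mono[of "K - {\<tau>}" K]]
        by fastforce
      then show ?thesis
        using hom1 \<open>g2 ` B \<subseteq> realization L\<close> homotopic_with_trans by blast
    qed
  qed
  then show thesis
    using that by blast
qed

section \<open>The disc\<close>

lemma topspace_ndisc: "topspace (ndisc i) = {x. (\<forall>k\<ge>i. x k = 0) \<and> (\<Sum>k<i. (x k)\<^sup>2) \<le> 1}"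
  by (auto simp: ndisc_def topspace_Euclidean_space)

lemma ndisc_eq_subtopology: "ndisc i = subtopology (powertop_real UNIV) (topspace (ndisc i))"
  unfolding ndisc_def Euclidean_space_def subtopology_subtopology by (simp add: Int_commute)

lemma continuous_map_into_ndisc:
  "continuous_map X (ndisc i) g \<longleftrightarrow>
     (\<forall>k. continuous_map X euclideanreal (\<lambda>x. g x k)) \<and> g ` topspace X \<subseteq> topspace (ndisc i)"
  by (subst ndisc_eq_subtopology)
    (simp add: continuous_map_in_subtopology continuous_map_componentwise_UNIV image_subset_iff_funcset)

lemma continuous_map_ndisc_component: "continuous_map (ndisc i) euclideanreal (\<lambda>x. x k)"
  using continuous_map_into_ndisc[of "ndisc i" i id] by simp

lemma topspace_nsphere_subset_ndisc:
  assumes "1 \<le> i"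
  shows "topspace (nsphere (i - 1)) \<subseteq> topspace (ndisc i)"
proof -
  have "{..i - 1} = {..<i}"
    using assms by auto
  then show ?thesis
    unfolding topspace_ndisc nsphere by auto
qed

lemma disc_base_in_nsphere: "disc_base \<in> topspace (nsphere n)"
  using in_topspace_nsphere[of n] unfolding disc_base_def .

lemma convex_combination_in_ndisc:
  assumes "x \<in> topspace (ndisc i)" "y \<in> topspace (ndisc i)" "0 \<le> t" "t \<le> 1"
  shows "(\<lambda>k. (1 - t) * x k + t * y k) \<in> topspace (ndisc i)"
proof -
  have "(\<Sum>k<i. ((1 - t) * x k + t * y k)\<^sup>2) \<le> (\<Sum>k<i. (1 - t) * (x k)\<^sup>2 + t * (y k)\<^sup>2)"
    using convex_onD[OF convex_power2, of t] assms(3,4) by (intro sum_mono) simp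
  also have "\<dots> = (1 - t) * (\<Sum>k<i. (x k)\<^sup>2) + t * (\<Sum>k<i. (y k)\<^sup>2)"
    by (simp add: sum.distrib sum_distrib_left)
  also have "\<dots> \<le> (1 - t) * 1 + t * 1"
    using assms by (intro add_mono mult_left_mono) (auto simp: topspace_ndisc)
  finally show ?thesis
    using assms(1,2) by (simp add: topspace_ndisc)
qed

lemma ndisc_contractible_rel_base:
  assumes "1 \<le> i"
  shows "homotopic_with (\<lambda>h. h disc_base = disc_base \<and> h ` topspace (ndisc i) \<subseteq> topspace (ndisc i))
           (ndisc i) (ndisc i) id (\<lambda>_. disc_base)"
proof -
  define H where "H = (\<lambda>(t::real, x::nat \<Rightarrow> real) k. (1 - t) * x k + t * disc_base k)"
  have base: "disc_base \<in> topspace (ndisc i)"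
    using topspace_nsphere_subset_ndisc[OF assms] disc_base_in_nsphere by blast
  have H_in: "H (t, x) \<in> topspace (ndisc i)" if "x \<in> topspace (ndisc i)" "t \<in> {0..1}" for t x
    using convex_combination_in_ndisc[OF that(1) base] that(2) by (simp add: H_def)
  have "continuous_map (prod_topology (top_of_set {0..1}) (ndisc i)) (ndisc i) H"
    unfolding continuous_map_into_ndisc
  proof (intro conjI allI)
    fix k
    have "continuous_map (prod_topology (top_of_set {0..1}) (ndisc i)) euclideanreal (\<lambda>p. snd p k)"
      using continuous_map_compose[OF continuous_map_snd continuous_map_ndisc_component]
      by (simp add: o_def)
    moreover have "continuous_map (prod_topology (top_of_set {0..1}) (ndisc i)) euclideanreal fst"
      using continuous_map_fst continuous_map_into_fulltopology by blast
    ultimately show "continuous_map (prod_topology (top_of_set {0..1}) (ndisc i)) euclideanreal (\<lambda>p. H p k)"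
      unfolding H_def case_prod_unfold by (intro continuous_intros)
  qed (use H_in in auto)
  moreover have "H (t, disc_base) = disc_base" for t
    by (simp add: H_def algebra_simps)
  ultimately show ?thesis
    unfolding homotopic_with_def using H_in
    by (intro exI[of _ H]) (auto simp: H_def)
qed

lemma ndisc_embedding:
  assumes "i \<le> CARD('n::finite)"
  obtains \<phi> :: "(nat \<Rightarrow> real) \<Rightarrow> real ^ 'n" and \<psi> B P where
    "continuous_map (ndisc i) (top_of_set B) \<phi>" "continuous_map (top_of_set B) (ndisc i) \<psi>"
    "\<And>x. x \<in> topspace (ndisc i) \<Longrightarrow> \<psi> (\<phi> x) = x"
    "B \<subseteq> P" "closed B" "polytope P" "aff_dim P \<le> int i"
proof -
  obtain \<iota> :: "nat \<Rightarrow> 'n" where \<iota>: "inj_on \<iota> {..<i}"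
    using card_le_inj[of "{..<i}" "UNIV :: 'n set"] assms by auto
  define J where "J = \<iota> ` {..<i}"
  define \<phi> where "\<phi> x = (\<Sum>k<i. x k *\<^sub>R axis (\<iota> k) 1 :: real ^ 'n)" for x
  define \<psi> where "\<psi> y = (\<lambda>k. if k < i then y $ \<iota> k else 0)" for y :: "real ^ 'n"
  define c :: "real ^ 'n" where "c = (\<chi> v. if v \<in> J then 1 else 0)"
  define P where "P = cbox (-c) c"
  define B where "B = P \<inter> {y. (\<Sum>k<i. (y $ \<iota> k)\<^sup>2) \<le> 1}"
  have \<phi>_in: "\<phi> x $ \<iota> k = x k" if "k < i" for x k
  proof -
    have "\<phi> x $ \<iota> k = (\<Sum>j<i. if j = k then x j else 0)"
      unfolding \<phi>_def sum_component
      by (intro sum.cong refl) (use \<iota> that in \<open>auto simp: axis_def inj_on_def\<close>)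
    then show ?thesis
      using that by simp
  qed
  have \<phi>_out: "\<phi> x $ v = 0" if "v \<notin> J" for x v
    unfolding \<phi>_def sum_component using that by (auto simp: axis_def J_def intro!: sum.neutral)
  have P_zero: "y $ v = 0" if "y \<in> P" "v \<notin> J" for y v
  proof -
    have "- c $ v \<le> y $ v" "y $ v \<le> c $ v"
      using that(1) unfolding P_def mem_box_cart by auto
    then show ?thesis
      using that(2) by (simp add: c_def)
  qed
  have \<phi>_B: "\<phi> x \<in> B" if "x \<in> topspace (ndisc i)" for x
  proof -
    have x: "(\<Sum>k<i. (x k)\<^sup>2) \<le> 1"
      using that by (simp add: topspace_ndisc)
    have "(x k)\<^sup>2 \<le> 1" if "k < i" for k
      using member_le_sum[of k "{..<i}" "\<lambda>k. (x k)\<^sup>2"] that x by simp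
    then have "\<bar>x k\<bar> \<le> 1" if "k < i" for k
      using that abs_le_square_iff[of "x k" 1] by simp
    then have "\<phi> x \<in> P"
      using \<phi>_in \<phi>_out by (auto simp: P_def mem_box_cart c_def J_def abs_le_iff)
    then show ?thesis
      using x \<phi>_in by (simp add: B_def)
  qed
  have "continuous_map (ndisc i) euclidean (\<lambda>x. x k *\<^sub>R a)" for k and a :: "real ^ 'n"
    using continuous_map_ndisc_component by (simp add: continuous_map_atin tendsto_scaleR)
  then have "continuous_map (ndisc i) euclidean \<phi>"
    unfolding \<phi>_def by (intro continuous_map_sum) auto
  then have "continuous_map (ndisc i) (top_of_set B) \<phi>"
    using \<phi>_B by (auto simp: continuous_map_in_subtopology)
  moreover have "continuous_map (top_of_set B) (ndisc i) \<psi>"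
    unfolding continuous_map_into_ndisc
    by (auto simp: \<psi>_def B_def topspace_ndisc intro!: continuous_intros)
  moreover have "\<psi> (\<phi> x) = x" if "x \<in> topspace (ndisc i)" for x
    using that \<phi>_in by (auto simp: \<psi>_def topspace_ndisc fun_eq_iff)
  moreover have "closed B"
    unfolding B_def P_def by (intro closed_Int closed_cbox closed_Collect_le continuous_intros)
  moreover have "aff_dim P \<le> int i"
    using aff_dim_le_card_support[of P J] P_zero card_image_le[of "{..<i}" \<iota>]
    unfolding J_def by fastforce
  moreover have "B \<subseteq> P" "polytope P"
    by (auto simp: B_def P_def polytope_interval)
  ultimately show thesis
    using that by blast
qed

section \<open>Connectivity of a pair of realizations\<close>

lemma rel_homotopy_trivial_if_compressible:
  assumes "1 \<le> i"
    and compress: "\<And>f. \<lbrakk>continuous_map (ndisc i) (top_of_set X) f;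
          f ` topspace (nsphere (i - 1)) \<subseteq> A\<rbrakk> \<Longrightarrow>
        \<exists>g. g ` topspace (ndisc i) \<subseteq> A \<and>
          homotopic_with (\<lambda>h. \<forall>x\<in>topspace (nsphere (i - 1)). h x = f x) (ndisc i) (top_of_set X) f g"
  shows "rel_homotopy_trivial i X A x0"
  unfolding rel_homotopy_trivial_def
proof (intro allI impI, elim conjE)
  let ?S = "topspace (nsphere (i - 1))"
  let ?P = "\<lambda>h. h ` ?S \<subseteq> A \<and> h disc_base = x0"
  fix f
  assume f: "continuous_map (ndisc i) (top_of_set X) f" and "f ` ?S \<subseteq> A" "f disc_base = x0"
  then obtain g where g_A: "g ` topspace (ndisc i) \<subseteq> A"
    and rel_S: "homotopic_with (\<lambda>h. \<forall>x\<in>?S. h x = f x) (ndisc i) (top_of_set X) f g"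
    using compress by blast
  have fg: "homotopic_with ?P (ndisc i) (top_of_set X) f g"
  proof (rule homotopic_with_mono[OF rel_S])
    fix h assume "\<forall>x\<in>?S. h x = f x"
    then show "?P h"
      using \<open>f ` ?S \<subseteq> A\<close> \<open>f disc_base = x0\<close> disc_base_in_nsphere by (simp add: image_subset_iff)
  qed
  have "g disc_base = x0"
    using homotopic_with_imp_property[OF fg] by blast
  have "homotopic_with ?P (ndisc i) (top_of_set X) (g \<circ> id) (g \<circ> (\<lambda>_. disc_base))"
  proof (rule homotopic_with_compose_continuous_map_left[OF ndisc_contractible_rel_base[OF assms(1)]])
    show "continuous_map (ndisc i) (top_of_set X) g"
      using homotopic_with_imp_continuous_maps[OF fg] by blast
    show "?P (g \<circ> j)" if "j disc_base = disc_base \<and> j ` topspace (ndisc i) \<subseteq> topspace (ndisc i)" for j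
      using that g_A \<open>g disc_base = x0\<close> topspace_nsphere_subset_ndisc[OF assms(1)]
      by (auto simp: image_subset_iff)
  qed
  then have "homotopic_with ?P (ndisc i) (top_of_set X) g (\<lambda>_. x0)"
    by (simp add: o_def \<open>g disc_base = x0\<close>)
  then show "homotopic_with ?P (ndisc i) (top_of_set X) f (\<lambda>_. x0)"
    using fg homotopic_with_trans by blast
qed

lemma homotopic_disc_map_into_subcomplex:
  fixes K L :: "('n::finite) set set"
  assumes "downward_closed K" "downward_closed L" "L \<subseteq> K" "1 \<le> i" "i \<le> CARD('n)"
    and large: "\<And>\<tau>. \<tau> \<in> K - L \<Longrightarrow> i + 1 < card \<tau>"
    and f: "continuous_map (ndisc i) (top_of_set (realization K)) f"
    and f_S: "f ` topspace (nsphere (i - 1)) \<subseteq> realization L"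
  obtains g where "g ` topspace (ndisc i) \<subseteq> realization L"
    "homotopic_with (\<lambda>h. \<forall>x\<in>topspace (nsphere (i - 1)). h x = f x)
       (ndisc i) (top_of_set (realization K)) f g"
proof -
  let ?S = "topspace (nsphere (i - 1))" and ?D = "topspace (ndisc i)"
  let ?Q = "\<lambda>h. \<forall>x\<in>?S. h x = f x"
  have S_D: "?S \<subseteq> ?D"
    by (rule topspace_nsphere_subset_ndisc[OF \<open>1 \<le> i\<close>])
  obtain \<phi> :: "(nat \<Rightarrow> real) \<Rightarrow> real ^ 'n" and \<psi> B P where
    \<phi>: "continuous_map (ndisc i) (top_of_set B) \<phi>" and \<psi>: "continuous_map (top_of_set B) (ndisc i) \<psi>"
    and \<psi>\<phi>: "\<And>x. x \<in> ?D \<Longrightarrow> \<psi> (\<phi> x) = x"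
    and "B \<subseteq> P" "closed B" "polytope P" "aff_dim P \<le> int i"
    by (rule ndisc_embedding[OF \<open>i \<le> CARD('n)\<close>]) (rule that; assumption)
  define F where "F = f \<circ> \<psi>"
  have "continuous_map (top_of_set B) (top_of_set (realization K)) F"
    unfolding F_def by (rule continuous_map_compose[OF \<psi> f])
  then have "continuous_on B F" "F ` B \<subseteq> realization K"
    by (auto simp: image_subset_iff_funcset)
  have \<phi>_B: "\<phi> ` ?D \<subseteq> B"
    using \<phi> by (auto simp: continuous_map_def)
  have F\<phi>: "F (\<phi> x) = f x" if "x \<in> ?D" for x
    using \<psi>\<phi> that by (simp add: F_def)
  obtain G where "G ` B \<subseteq> realization L"
    and FG: "homotopic_with_canon (\<lambda>h. \<forall>z\<in>\<phi> ` ?S. h z = F z) B (realization K) F G"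
  proof (rule homotopic_into_subcomplex[OF \<open>B \<subseteq> P\<close> \<open>closed B\<close> \<open>polytope P\<close> assms(1-3)
        _ \<open>continuous_on B F\<close> \<open>F ` B \<subseteq> realization K\<close>])
    show "aff_dim P < int (card \<tau>) - 1" if "\<tau> \<in> K - L" for \<tau>
      using large[OF that] \<open>aff_dim P \<le> int i\<close> by linarith
    show "\<phi> ` ?S \<subseteq> B" "F ` \<phi> ` ?S \<subseteq> realization L"
      using \<phi>_B S_D F\<phi> f_S by (auto simp: image_subset_iff)
  qed
  have "homotopic_with ?Q (ndisc i) (top_of_set (realization K)) (F \<circ> \<phi>) (G \<circ> \<phi>)"
  proof (rule homotopic_with_compose_continuous_map_right[OF FG \<phi>])
    fix j assume "\<forall>z\<in>\<phi> ` ?S. j z = F z"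
    then show "?Q (j \<circ> \<phi>)"
      using S_D F\<phi> by (simp add: subset_iff)
  qed
  then have "homotopic_with ?Q (ndisc i) (top_of_set (realization K)) f (G \<circ> \<phi>)"
  proof (rule homotopic_with_eq)
    show "?Q h \<longleftrightarrow> ?Q k" if "\<And>x. x \<in> ?D \<Longrightarrow> h x = k x" for h k
      using that S_D by (simp add: subset_iff)
  qed (simp_all add: F\<phi>)
  moreover have "(G \<circ> \<phi>) ` ?D \<subseteq> realization L"
    using \<phi>_B \<open>G ` B \<subseteq> realization L\<close> by auto
  ultimately show thesis
    using that by blast
qed

lemma rel_homotopy_trivial_realization:
  fixes K L :: "('n::finite) set set"
  assumes "downward_closed K" "downward_closed L" "L \<subseteq> K" "1 \<le> i"
    and large: "\<And>\<tau>. \<tau> \<in> K - L \<Longrightarrow> i + 1 < card \<tau>"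
  shows "rel_homotopy_trivial i (realization K) (realization L) x0"
proof (rule rel_homotopy_trivial_if_compressible[OF \<open>1 \<le> i\<close>])
  fix f
  assume f: "continuous_map (ndisc i) (top_of_set (realization K)) f"
    and f_S: "f ` topspace (nsphere (i - 1)) \<subseteq> realization L"
  show "\<exists>g. g ` topspace (ndisc i) \<subseteq> realization L \<and>
      homotopic_with (\<lambda>h. \<forall>x\<in>topspace (nsphere (i - 1)). h x = f x)
        (ndisc i) (top_of_set (realization K)) f g"
  proof (cases "K - L = {}")
    case True
    then have "realization K = realization L"
      using \<open>L \<subseteq> K\<close> by (metis Diff_eq_empty_iff subset_antisym)
    then show ?thesis
      using f by (intro exI[of _ f]) (auto simp: continuous_map_in_subtopology)
  next
    case False
    then obtain \<tau> where "\<tau> \<in> K - L"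
      by blast
    then have "i \<le> CARD('n)"
      using large[of \<tau>] card_mono[of UNIV \<tau>] by simp
    then obtain g where "g ` topspace (ndisc i) \<subseteq> realization L"
      "homotopic_with (\<lambda>h. \<forall>x\<in>topspace (nsphere (i - 1)). h x = f x)
        (ndisc i) (top_of_set (realization K)) f g"
      by (rule homotopic_disc_map_into_subcomplex[OF assms(1-4) _ large f f_S])
    then show ?thesis
      by blast
  qed
qed

lemma pair_connected_realization:
  fixes K L :: "('n::finite) set set"
  assumes "downward_closed K" "downward_closed L" "L \<subseteq> K"
    and large: "\<And>\<tau>. \<tau> \<in> K - L \<Longrightarrow> m + 1 < card \<tau>"
  shows "pair_connected m (realization K) (realization L)"
  unfolding pair_connected_def
proof (intro conjI ballI allI impI)
  show "realization L \<subseteq> realization K"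
    using \<open>L \<subseteq> K\<close> by (rule realization_mono)
  show "rel_homotopy_trivial i (realization K) (realization L) x0" if "1 \<le> i \<and> i \<le> m" for i x0
    using that large by (intro rel_homotopy_trivial_realization[OF assms(1-3)]) force+
  fix x assume "x \<in> realization K"
  then obtain \<sigma> where "\<sigma> \<in> K" "x \<in> simplex_of \<sigma>"
    unfolding realization_eq_UN_simplex_of by blast
  then obtain v where "v \<in> \<sigma>"
    by (cases "\<sigma> = {}") (auto simp: simplex_of_def)
  then have "{v} \<in> L"
    using \<open>\<sigma> \<in> K\<close> \<open>downward_closed K\<close> large[of "{v}"] unfolding downward_closed_def by force
  then have "axis v 1 \<in> realization L"
    unfolding realization_eq_UN_simplex_of using axis_mem_simplex_of by blast
  moreover have "path_component (simplex_of \<sigma>) x (axis v 1)"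
    using \<open>x \<in> simplex_of \<sigma>\<close> axis_mem_simplex_of[OF \<open>v \<in> \<sigma>\<close>]
      convex_imp_path_connected[OF convex_simplex_of] path_connected_component by blast
  moreover have "simplex_of \<sigma> \<subseteq> realization K"
    using \<open>\<sigma> \<in> K\<close> unfolding realization_eq_UN_simplex_of by blast
  ultimately show "\<exists>a\<in>realization L. path_component (realization K) x a"
    using path_component_mono by blast
qed

section \<open>Independence complexes\<close>

lemma indep_number_mono:
  assumes "\<rho> \<subseteq> \<sigma>"
  shows "indep_number E \<rho> \<le> indep_number E (\<sigma> :: ('n::finite) set)"
  unfolding indep_number_def
  by (rule Max_mono) (use assms in \<open>auto simp: indep_set_def intro: finite_subset[of _ "card ` UNIV"]\<close>)

lemma indep_number_le_card: "indep_number E (\<sigma> :: ('n::finite) set) \<le> card \<sigma>"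
  unfolding indep_number_def
  by (rule Max.boundedI) (auto simp: indep_set_def intro: card_mono finite_subset[of _ "card ` UNIV"])

lemma downward_closed_BI: "downward_closed (BI d V (E :: ('n::finite) \<Rightarrow> _))"
  unfolding downward_closed_def BI_def using indep_number_mono le_less_trans by blast

lemma BI_subset_BI_Suc: "BI d V E \<subseteq> BI (d + 1) V E"
  unfolding BI_def by auto

lemma card_ge_of_mem_BI_diff:
  assumes "\<tau> \<in> BI (d + 1) V E - BI d V E"
  shows "d \<le> card (\<tau> :: ('n::finite) set)"
  using assms indep_number_le_card[of E \<tau>] unfolding BI_def by auto

theorem mainTheorem15:
  fixes V :: "('n::finite) set" and E :: "'n \<Rightarrow> 'n \<Rightarrow> bool" and d :: nat
  assumes "simple_graph V E" and "d \<ge> 2"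
  shows "pair_connected (d - 2) (realization (BI (d + 1) V E)) (realization (BI d V E))"
proof (rule pair_connected_realization[OF downward_closed_BI downward_closed_BI BI_subset_BI_Suc])
  show "d - 2 + 1 < card \<tau>" if "\<tau> \<in> BI (d + 1) V E - BI d V E" for \<tau>
    using card_ge_of_mem_BI_diff[OF that] \<open>d \<ge> 2\<close> by linarith
qed

end
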